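(* Let $\Omega>0$ denote the maximum absolute value of the stored quantities, let $C$ be the column index of the array of executed (visited) indicators in $X\in\mathbb{R}^{K\times d}$, and let $E$ be a target column index. Then there exists a single transformer layer that simulates the termination operation $X[1,E]\leftarrow(\text{no entry of }X[2{:},C]\text{ equals }0)$, i.e. it writes $1$ into $X[1,E]$ if none of the entries $X[2,C],\dots,X[K,C]$ is zero and $0$ otherwise.
   Context: Conventions: rows/columns indexed from $1$; $X[i,j]$ is the $(i,j)$ entry; $X[2{:},j]$ denotes the entries of column $j$ in rows $2,\dots,K$. $\phi(x)=\max\{x,0\}$ entrywise. Hardmax $\sigma$: row $i$ of $\sigma(\Phi)$ is $\frac{1}{|S_i|}\sum_{k\in S_i}e_k$, $S_i=\{k:\Phi_{ik}=\max_j\Phi_{ij}\}$. Positional encoding: $p_0=(0,1)^\top$, $p_i=R_{\widehat\delta}^\top p_{i-1}$ with $R_{\widehat\delta}=\begin{bmatrix}\cos\widehat\delta&-\sin\widehat\delta\\ \sin\widehat\delta&\cos\widehat\delta\end{bmatrix}$, $\widehat\delta$ the nearest representable approximation of the minimum increment angle. For a weighted hypergraph with incident matrix $A\in\mathbb{R}^{n_v\times n_e}$ ($A_{ij}=w(e_j)$ if vertex $v_i\in e_j$, else $0$) and $K\ge\max\{n_v,n_e\}+1$, the padded incident matrix $\widetilde A\in\mathbb{R}^{K\times K}$ has $\widetilde A_{i+1,j+1}=A_{ij}$, zeros elsewhere. A transformer layer on $X\in\mathbb{R}^{K\times d}$ is $f(X,\widetilde A)=f_{\mathrm{mlp}}(f_{\mathrm{attn}}(X,\widetilde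 A))$, $f_{\mathrm{attn}}(X,\widetilde A)=\sum_{i\in M_A}\psi^{(i)}(X,\widetilde A)+\sum_{i\in M_{A^\top}}\psi^{(i)}(X,\widetilde A^\top)+\sum_{i\in M}\psi^{(i)}(X,I_K)+X$, $\psi(X,B)=B\,\sigma(XW_QW_K^\top X^\top)XW_V$ ($W_Q,W_K\in\mathbb{R}^{d\times2}$, $W_V\in\mathbb{R}^{d\times d}$), $f_{\mathrm{mlp}}(X)=Z^{(4)}W^{(4)}+X$, $Z^{(1)}=X$, $Z^{(j+1)}=\phi(Z^{(j)}W^{(j)})$ ($j=1,2,3$). Storage convention: scalars in the top row of a column (rest $0$), arrays of length $K-1$ in rows $2,\dots,K$ (top $0$); designated columns $B_{\mathrm{global}}$ (top $1$, rest $0$), $B_{\mathrm{local}}$ (top $0$, rest $1$), positional columns $P_1,P_2$ (array position $i$ holds $p_i^{(1)},p_i^{(2)}$), and scratchpad columns. "Simulating an operation" means the layer's weights can be chosen so that applying it to $X$ performs the stated update. *)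

theory Defs
  imports "Jordan_Normal_Form.Matrix"
begin

text \<open>Matrices are Jordan_Normal_Form matrices (0-based internally).
  The paper's 1-based entry X[i,j] is written ent X i j.\<close>

definition ent :: "real mat \<Rightarrow> nat \<Rightarrow> nat \<Rightarrow> real" where
  "ent X i j = X $$ (i - 1, j - 1)"

definition relu_mat :: "real mat \<Rightarrow> real mat" where
  "relu_mat M = map_mat (\<lambda>x. max x 0) M"

definition hardmax :: "real mat \<Rightarrow> real mat" where
  "hardmax P = mat (dim_row P) (dim_col P) (\<lambda>(i, j).
     (let m = Max {P $$ (i, k) | k. k < dim_col P};
          S = {k. k < dim_col P \<and> P $$ (i, k) = m}
      in if P $$ (i, j) = m then 1 / real (card S) else 0))"

type_synonym head = "real mat \<times> real mat \<times> real mat"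

definition psi :: "head \<Rightarrow> real mat \<Rightarrow> real mat \<Rightarrow> real mat" where
  "psi h X B = (case h of (WQ, WK, WV) \<Rightarrow>
     B * hardmax (X * WQ * transpose_mat WK * transpose_mat X) * X * WV)"

definition sum_heads :: "head list \<Rightarrow> real mat \<Rightarrow> real mat \<Rightarrow> real mat" where
  "sum_heads hs X B = foldr (\<lambda>h acc. psi h X B + acc) hs (0\<^sub>m (dim_row X) (dim_col X))"

record layer =
  heads_A  :: "head list"
  heads_AT :: "head list"
  heads_I  :: "head list"
  W1 :: "real mat"
  W2 :: "real mat"
  W3 :: "real mat"
  W4 :: "real mat"

definition valid_head :: "nat \<Rightarrow> head \<Rightarrow> bool" where
  "valid_head d h = (case h of (WQ, WK, WV) \<Rightarrow>
     WQ \<in> carrier_mat d 2 \<and> WK \<in> carrier_mat d 2 \<and> WV \<in> carrier_mat d d)"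

definition valid_layer :: "nat \<Rightarrow> layer \<Rightarrow> bool" where
  "valid_layer d L = ((\<forall>h \<in> set (heads_A L) \<union> set (heads_AT L) \<union> set (heads_I L). valid_head d h)
     \<and> (\<exists>h1 h2 h3. W1 L \<in> carrier_mat d h1 \<and> W2 L \<in> carrier_mat h1 h2
        \<and> W3 L \<in> carrier_mat h2 h3 \<and> W4 L \<in> carrier_mat h3 d))"

definition f_attn :: "layer \<Rightarrow> real mat \<Rightarrow> real mat \<Rightarrow> real mat" where
  "f_attn L X A = sum_heads (heads_A L) X A + sum_heads (heads_AT L) X (transpose_mat A)
      + sum_heads (heads_I L) X (1\<^sub>m (dim_row X)) + X"

definition f_mlp :: "layer \<Rightarrow> real mat \<Rightarrow> real mat" where
  "f_mlp L X = relu_mat (relu_mat (relu_mat (X * W1 L) * W2 L) * W3 L) * W4 L + X"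

definition apply_layer :: "layer \<Rightarrow> real mat \<Rightarrow> real mat \<Rightarrow> real mat" where
  "apply_layer L X A = f_mlp L (f_attn L X A)"

definition upd_entry :: "real mat \<Rightarrow> nat \<Rightarrow> nat \<Rightarrow> real \<Rightarrow> real mat" where
  "upd_entry X i j v = mat (dim_row X) (dim_col X)
     (\<lambda>(r, c). if r = i - 1 \<and> c = j - 1 then v else X $$ (r, c))"

end

theory Submission
  imports Defs
begin

(* Both heads attend through the identity with query (x_Bglobal, x_Blocal) and write a column
   difference into column E.  The first head has key (x_Blocal - x_C, x_Bglobal): the top row
   scores 1 exactly at the unvisited array rows and 0 elsewhere, and reads x_C - x_Blocal, which is
   -1 at unvisited rows and 0 at all others; array rows attend to the top row and read 0.  The
   second head has key = query: the top row attends to itself and reads x_Bglobal - x_E =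
   1 - X[1,E], array rows attend to array rows and read 0.  With the residual connection the
   top entry of column E becomes 1 - [some row unvisited], and the MLP is switched off. *)

lemma index_mult_mat_sum:
  assumes "i < dim_row A" "j < dim_col B" "dim_col A = dim_row B"
  shows "(A * B) $$ (i, j) = (\<Sum>k<dim_col A. A $$ (i, k) * B $$ (k, j))"
  using assms by (simp add: scalar_prod_def atLeast0LessThan)

lemma sum_mult_of_bool_eq:
  fixes x :: "nat \<Rightarrow> 'a::comm_semiring_1"
  assumes "a < n"
  shows "(\<Sum>p<n. x p * of_bool (p = a)) = x a"
  using assms by (simp add: if_distrib cong: if_cong)

lemma sum_mult_of_bool_diff_eq:
  fixes x :: "nat \<Rightarrow> 'a::comm_ring_1"
  assumes "a < n" "b < n"
  shows "(\<Sum>p<n. x p * (of_bool (p = a) - of_bool (p = b))) = x a - x b"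
  using assms by (simp add: right_diff_distrib sum_subtractf sum_mult_of_bool_eq)

lemma ball_from_2_shift: "(\<forall>i\<in>{2..K}. P i) \<longleftrightarrow> (\<forall>k\<in>{1..<K}. P (Suc k))"
proof
  assume shifted: "\<forall>k\<in>{1..<K}. P (Suc k)"
  show "\<forall>i\<in>{2..K}. P i"
  proof
    fix i assume "i \<in> {2..K}"
    then have "i - 1 \<in> {1..<K}" "Suc (i - 1) = i" by auto
    then show "P i" using shifted by metis
  qed
qed auto

lemma hardmax_dims [simp]:
  "dim_row (hardmax P) = dim_row P" "dim_col (hardmax P) = dim_col P"
  by (simp_all add: hardmax_def)

lemma hardmax_mult_index_const_on_argmax:
  fixes P V :: "real mat"
  assumes i: "i < dim_row P" and nonempty: "0 < dim_col P"
    and V: "V \<in> carrier_mat (dim_col P) n" and j: "j < n"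
    and argmax: "\<And>k. k < dim_col P \<Longrightarrow> (\<And>k'. k' < dim_col P \<Longrightarrow> P $$ (i, k') \<le> P $$ (i, k))
                  \<Longrightarrow> V $$ (k, j) = a"
  shows "(hardmax P * V) $$ (i, j) = a"
proof -
  let ?n = "dim_col P"
  define m where "m = Max {P $$ (i, k) | k. k < ?n}"
  define S where "S = {k. k < ?n \<and> P $$ (i, k) = m}"
  have fin: "finite {P $$ (i, k) | k. k < ?n}" by simp
  have m_ge: "P $$ (i, k) \<le> m" if "k < ?n" for k
    unfolding m_def using that fin by (intro Max_ge) auto
  have "m \<in> {P $$ (i, k) | k. k < ?n}"
    unfolding m_def using fin nonempty by (intro Max_in) auto
  then have "S \<noteq> {}" unfolding S_def by auto
  moreover have S_sub: "S \<subseteq> {..<?n}" unfolding S_def by auto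
  ultimately have card_S: "card S > 0" by (simp add: card_gt_0_iff finite_subset)
  have V_S: "V $$ (k, j) = a" if "k \<in> S" for k
    using that m_ge unfolding S_def by (intro argmax) auto
  have hardmax_row: "hardmax P $$ (i, k) = (if k \<in> S then 1 / real (card S) else 0)" if "k < ?n" for k
    using i that unfolding hardmax_def S_def m_def by (simp add: Let_def)
  have "(hardmax P * V) $$ (i, j) = (\<Sum>k<?n. hardmax P $$ (i, k) * V $$ (k, j))"
    using i j V by (subst index_mult_mat_sum) auto
  also have "\<dots> = (\<Sum>k<?n. if k \<in> S then a / real (card S) else 0)"
    using hardmax_row V_S by (intro sum.cong) auto
  also have "\<dots> = (\<Sum>k\<in>S. a / real (card S))"
    using S_sub by (simp add: sum.If_cases Int_absorb1)
  also have "\<dots> = a" using card_S by simp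
  finally show ?thesis .
qed

abbreviation attention_scores :: "'a::comm_semiring_0 mat \<Rightarrow> 'a mat \<Rightarrow> 'a mat \<Rightarrow> 'a mat" where
  "attention_scores X WQ WK \<equiv> X * WQ * transpose_mat WK * transpose_mat X"

lemma psi_one_mat:
  assumes X: "X \<in> carrier_mat K d" and "WQ \<in> carrier_mat d m" "WK \<in> carrier_mat d m"
    and WV: "WV \<in> carrier_mat d n"
  shows "psi (WQ, WK, WV) X (1\<^sub>m K) =
    hardmax (attention_scores X WQ WK) * (X * WV)"
proof -
  define H where "H = hardmax (attention_scores X WQ WK)"
  have H: "H \<in> carrier_mat K K"
    unfolding H_def using assms by (intro carrier_matI) (simp_all add: carrier_matD)
  have "psi (WQ, WK, WV) X (1\<^sub>m K) = 1\<^sub>m K * H * X * WV" unfolding psi_def H_def by simp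
  also have "\<dots> = H * X * WV" using H by simp
  also have "\<dots> = H * (X * WV)" using H X WV by (rule assoc_mult_mat)
  finally show ?thesis unfolding H_def .
qed

lemma attention_score_index:
  fixes X WQ WK :: "'a :: comm_semiring_0 mat"
  assumes X: "X \<in> carrier_mat K d" and WQ: "WQ \<in> carrier_mat d m" and WK: "WK \<in> carrier_mat d m"
    and "i < K" "k < K"
  shows "attention_scores X WQ WK $$ (i, k) =
    (\<Sum>r<m. (X * WQ) $$ (i, r) * (X * WK) $$ (k, r))"
proof -
  have "X * WQ * transpose_mat WK * transpose_mat X = (X * WQ) * (transpose_mat WK * transpose_mat X)"
    using assms by (intro assoc_mult_mat) auto
  also have "\<dots> = (X * WQ) * transpose_mat (X * WK)"
    using transpose_mult[OF X WK] by simp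
  finally have factored: "X * WQ * transpose_mat WK * transpose_mat X = (X * WQ) * transpose_mat (X * WK)" .
  show ?thesis
    unfolding factored using assms by (subst index_mult_mat_sum) (auto simp del: index_mult_mat(1))
qed

lemma f_mlp_zero_output:
  assumes "W3 L \<in> carrier_mat h2 h3" and "W4 L = 0\<^sub>m h3 (dim_col Y)"
  shows "f_mlp L Y = Y"
proof -
  have "relu_mat (relu_mat (relu_mat (Y * W1 L) * W2 L) * W3 L) * W4 L = 0\<^sub>m (dim_row Y) (dim_col Y)"
    using assms unfolding relu_mat_def by (simp add: right_mult_zero_mat' carrier_matD)
  then show ?thesis
    unfolding f_mlp_def by (simp add: left_add_zero_mat[OF carrier_matI[OF refl refl]])
qed

definition global_local_query :: "nat \<Rightarrow> nat \<Rightarrow> nat \<Rightarrow> real mat" where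
  "global_local_query d g l = mat d 2 (\<lambda>(p, r). of_bool (p = (if r = 0 then g else l)))"

definition unvisited_key :: "nat \<Rightarrow> nat \<Rightarrow> nat \<Rightarrow> nat \<Rightarrow> real mat" where
  "unvisited_key d c g l = mat d 2 (\<lambda>(p, r).
     if r = 0 then of_bool (p = l) - of_bool (p = c) else of_bool (p = g))"

definition difference_value :: "nat \<Rightarrow> nat \<Rightarrow> nat \<Rightarrow> nat \<Rightarrow> real mat" where
  "difference_value d a b e = mat d d (\<lambda>(p, j).
     if j = e then of_bool (p = a) - of_bool (p = b) else 0)"

lemma global_local_query_carrier: "global_local_query d g l \<in> carrier_mat d 2"
  by (simp add: global_local_query_def)

lemma unvisited_key_carrier: "unvisited_key d c g l \<in> carrier_mat d 2"
  by (simp add: unvisited_key_def)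

lemma difference_value_carrier: "difference_value d a b e \<in> carrier_mat d d"
  by (simp add: difference_value_def)

lemma difference_value_readout:
  assumes "X \<in> carrier_mat K d" "k < K" "j < d" "a < d" "b < d"
  shows "(X * difference_value d a b e) $$ (k, j) = (if j = e then X $$ (k, a) - X $$ (k, b) else 0)"
  using assms by (subst index_mult_mat_sum)
    (auto simp: difference_value_def sum_mult_of_bool_diff_eq simp del: index_mult_mat(1))

lemma global_local_query_readout:
  assumes "X \<in> carrier_mat K d" "k < K" "g < d" "l < d"
  shows "(X * global_local_query d g l) $$ (k, 0) = X $$ (k, g)"
    and "(X * global_local_query d g l) $$ (k, 1) = X $$ (k, l)"
  using assms by (subst index_mult_mat_sum;
      auto simp: global_local_query_def sum_mult_of_bool_eq simp del: index_mult_mat(1))+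

lemma unvisited_key_readout:
  assumes "X \<in> carrier_mat K d" "k < K" "c < d" "g < d" "l < d"
  shows "(X * unvisited_key d c g l) $$ (k, 0) = X $$ (k, l) - X $$ (k, c)"
    and "(X * unvisited_key d c g l) $$ (k, 1) = X $$ (k, g)"
  using assms by (subst index_mult_mat_sum;
      auto simp: unvisited_key_def sum_mult_of_bool_eq sum_mult_of_bool_diff_eq
        simp del: index_mult_mat(1))+

lemma unvisited_score:
  assumes "X \<in> carrier_mat K d" "i < K" "k < K" "c < d" "g < d" "l < d"
  shows "attention_scores X (global_local_query d g l) (unvisited_key d c g l) $$ (i, k)
    = X $$ (i, g) * (X $$ (k, l) - X $$ (k, c)) + X $$ (i, l) * X $$ (k, g)"
  using assms
  by (simp add: attention_score_index[OF _ global_local_query_carrier unvisited_key_carrier]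
      numeral_2_eq_2
      global_local_query_readout[unfolded One_nat_def] unvisited_key_readout[unfolded One_nat_def]
      del: index_mult_mat(1))

lemma self_score:
  assumes "X \<in> carrier_mat K d" "i < K" "k < K" "g < d" "l < d"
  shows "attention_scores X (global_local_query d g l) (global_local_query d g l) $$ (i, k)
    = X $$ (i, g) * X $$ (k, g) + X $$ (i, l) * X $$ (k, l)"
  using assms
  by (simp add: attention_score_index[OF _ global_local_query_carrier global_local_query_carrier]
      numeral_2_eq_2
      global_local_query_readout[unfolded One_nat_def] del: index_mult_mat(1))

lemma psi_difference_value_index:
  assumes X: "X \<in> carrier_mat K d" and WQ: "WQ \<in> carrier_mat d m" and WK: "WK \<in> carrier_mat d m"
    and i: "i < K" and j: "j < d" and ab: "a < d" "b < d"
    and attends: "\<And>k. k < K \<Longrightarrow>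
      (\<And>k'. k' < K \<Longrightarrow> attention_scores X WQ WK $$ (i, k') \<le> attention_scores X WQ WK $$ (i, k))
      \<Longrightarrow> X $$ (k, a) - X $$ (k, b) = v"
  shows "psi (WQ, WK, difference_value d a b e) X (1\<^sub>m K) $$ (i, j) = (if j = e then v else 0)"
proof -
  have V: "X * difference_value d a b e \<in> carrier_mat K d"
    using X difference_value_carrier by (rule mult_carrier_mat)
  have "(hardmax (attention_scores X WQ WK) * (X * difference_value d a b e)) $$ (i, j)
      = (if j = e then v else 0)"
  proof (rule hardmax_mult_index_const_on_argmax)
    fix k assume "k < dim_col (attention_scores X WQ WK)"
      and "\<And>k'. k' < dim_col (attention_scores X WQ WK)
             \<Longrightarrow> attention_scores X WQ WK $$ (i, k') \<le> attention_scores X WQ WK $$ (i, k)"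
    then show "(X * difference_value d a b e) $$ (k, j) = (if j = e then v else 0)"
      using X attends[of k] difference_value_readout[OF X _ j ab] by simp
  qed (use X WQ WK i j V in auto)
  then show ?thesis using psi_one_mat[OF X WQ WK difference_value_carrier] by simp
qed

definition termination_layer :: "nat \<Rightarrow> nat \<Rightarrow> nat \<Rightarrow> nat \<Rightarrow> nat \<Rightarrow> layer" where
  "termination_layer d c e g l =
     \<lparr>heads_A = [], heads_AT = [],
      heads_I = [(global_local_query d g l, unvisited_key d c g l, difference_value d c l e),
                 (global_local_query d g l, global_local_query d g l, difference_value d g e e)],
      W1 = 0\<^sub>m d 1, W2 = 0\<^sub>m 1 1, W3 = 0\<^sub>m 1 1, W4 = 0\<^sub>m 1 d\<rparr>"

lemma valid_termination_layer: "valid_layer d (termination_layer d c e g l)"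
  unfolding valid_layer_def valid_head_def termination_layer_def
  by (auto simp: global_local_query_carrier unvisited_key_carrier difference_value_carrier
      intro!: exI[of _ 1])

(* 0-based: c, e, g, l are the columns C, E, B_global, B_local; row 0 holds the scalars. *)
locale termination_input =
  fixes X :: "real mat" and c e g l :: nat
  assumes rows_nonempty: "0 < dim_row X"
    and cols: "c < dim_col X" "e < dim_col X" "g < dim_col X" "l < dim_col X"
    and global_row: "X $$ (0, g) = 1" "X $$ (0, l) = 0" "X $$ (0, c) = 0"
    and array_global: "\<forall>k\<in>{1..<dim_row X}. X $$ (k, g) = 0"
    and array_local: "\<forall>k\<in>{1..<dim_row X}. X $$ (k, l) = 1"
    and array_visited: "\<forall>k\<in>{1..<dim_row X}. X $$ (k, c) \<in> {0, 1}"
    and array_target: "\<forall>k\<in>{1..<dim_row X}. X $$ (k, e) = 0"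
begin

abbreviation "K \<equiv> dim_row X"
abbreviation "d \<equiv> dim_col X"
abbreviation "unvisited_scores \<equiv> attention_scores X (global_local_query d g l) (unvisited_key d c g l)"
abbreviation "self_scores \<equiv> attention_scores X (global_local_query d g l) (global_local_query d g l)"
abbreviation "all_visited \<equiv> \<forall>k\<in>{1..<K}. X $$ (k, c) \<noteq> 0"

lemma X_carrier: "X \<in> carrier_mat K d"
  by simp

lemma array_row:
  assumes "0 < k" "k < K"
  shows "X $$ (k, g) = 0" "X $$ (k, l) = 1" "X $$ (k, e) = 0" "X $$ (k, c) = 0 \<or> X $$ (k, c) = 1"
  using assms array_global array_local array_target array_visited by auto

lemma unvisited_head_attends:
  assumes i: "i < K" and k: "k < K"
    and argmax: "\<And>k'. k' < K \<Longrightarrow> unvisited_scores $$ (i, k') \<le> unvisited_scores $$ (i, k)"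
  shows "X $$ (k, c) - X $$ (k, l) = (if i = 0 \<and> \<not> all_visited then -1 else 0)"
proof -
  have score: "unvisited_scores $$ (i, k')
      = X $$ (i, g) * (X $$ (k', l) - X $$ (k', c)) + X $$ (i, l) * X $$ (k', g)" if "k' < K" for k'
    using i that cols by (intro unvisited_score[OF X_carrier]) auto
  consider (visited) "i = 0" all_visited | (unvisited) k0 where "i = 0" "k0 \<in> {1..<K}" "X $$ (k0, c) = 0"
    | (array) "0 < i" by blast
  then show ?thesis
  proof cases
    case visited
    then show ?thesis using k global_row array_row[of k] by (cases "k = 0") auto
  next
    case unvisited
    then have "k \<noteq> 0 \<and> X $$ (k, c) = 0"
      using argmax[of k0] k score global_row array_row[of k0] array_row[of k] by (cases "k = 0") auto
    then show ?thesis using unvisited k array_row[of k] by auto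
  next
    case array
    then have "k = 0"
      using argmax[of 0] rows_nonempty i k score global_row array_row[of i] array_row[of k] by auto
    then show ?thesis using array global_row by simp
  qed
qed

lemma self_head_attends:
  assumes i: "i < K" and k: "k < K"
    and argmax: "\<And>k'. k' < K \<Longrightarrow> self_scores $$ (i, k') \<le> self_scores $$ (i, k)"
  shows "X $$ (k, g) - X $$ (k, e) = (if i = 0 then 1 - X $$ (0, e) else 0)"
proof -
  have score: "self_scores $$ (i, k')
      = X $$ (i, g) * X $$ (k', g) + X $$ (i, l) * X $$ (k', l)" if "k' < K" for k'
    using i that cols by (intro self_score[OF X_carrier]) auto
  show ?thesis
  proof (cases "i = 0")
    case True
    then have "k = 0" using argmax[of 0] rows_nonempty k score global_row array_row[of k] by auto
    then show ?thesis using True global_row by simp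
  next
    case False
    then have "k \<noteq> 0" using argmax[of i] i k score global_row array_row[of i] by (cases "k = 0") auto
    then show ?thesis using False k array_row[of k] by simp
  qed
qed

lemma termination_attention_index:
  assumes i: "i < K" and j: "j < d"
  shows "f_attn (termination_layer d c e g l) X A $$ (i, j)
    = (if i = 0 \<and> j = e then (if all_visited then 1 else 0) else X $$ (i, j))"
proof -
  have unvisited_head:
    "psi (global_local_query d g l, unvisited_key d c g l, difference_value d c l e) X (1\<^sub>m K) $$ (i, j)
      = (if j = e then (if i = 0 \<and> \<not> all_visited then -1 else 0) else 0)"
    using cols
    by (intro psi_difference_value_index[OF X_carrier global_local_query_carrier unvisited_key_carrier i j]
        unvisited_head_attends[OF i]) auto
  have self_head:
    "psi (global_local_query d g l, global_local_query d g l, difference_value d g e e) X (1\<^sub>m K) $$ (i, j)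
      = (if j = e then (if i = 0 then 1 - X $$ (0, e) else 0) else 0)"
    using cols
    by (intro psi_difference_value_index[OF X_carrier global_local_query_carrier global_local_query_carrier i j]
        self_head_attends[OF i]) auto
  have "f_attn (termination_layer d c e g l) X A $$ (i, j)
      = psi (global_local_query d g l, unvisited_key d c g l, difference_value d c l e) X (1\<^sub>m K) $$ (i, j)
      + psi (global_local_query d g l, global_local_query d g l, difference_value d g e e) X (1\<^sub>m K) $$ (i, j)
      + X $$ (i, j)"
    using i j unfolding f_attn_def termination_layer_def sum_heads_def psi_def by simp
  then show ?thesis using unvisited_head self_head array_row(3)[of i] i by auto
qed

lemma apply_termination_layer:
  "apply_layer (termination_layer d c e g l) X A = upd_entry X 1 (Suc e) (if all_visited then 1 else 0)"
proof -
  have "f_attn (termination_layer d c e g l) X A = upd_entry X 1 (Suc e) (if all_visited then 1 else 0)"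
  proof (rule eq_matI)
    fix i j assume "i < dim_row (upd_entry X 1 (Suc e) (if all_visited then 1 else 0))"
      and "j < dim_col (upd_entry X 1 (Suc e) (if all_visited then 1 else 0))"
    then show "f_attn (termination_layer d c e g l) X A $$ (i, j)
        = upd_entry X 1 (Suc e) (if all_visited then 1 else 0) $$ (i, j)"
      by (simp add: termination_attention_index upd_entry_def)
  qed (simp_all add: f_attn_def upd_entry_def)
  moreover have "W3 (termination_layer d c e g l) \<in> carrier_mat 1 1"
    "W4 (termination_layer d c e g l) = 0\<^sub>m 1 (dim_col (upd_entry X 1 (Suc e) (if all_visited then 1 else 0)))"
    by (simp_all add: termination_layer_def upd_entry_def)
  ultimately show ?thesis unfolding apply_layer_def by (simp add: f_mlp_zero_output)
qed

end

theorem lemmaC6: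
  fixes K d :: nat and \<Omega> :: real and C E Bg Bl :: nat
  assumes "\<Omega> > 0" and "K \<ge> 1"
    and "C \<in> {1..d}" and "E \<in> {1..d}" and "Bg \<in> {1..d}" and "Bl \<in> {1..d}"
    and "distinct [C, E, Bg, Bl]"
  shows "\<exists>L. valid_layer d L \<and>
    (\<forall>X A. X \<in> carrier_mat K d \<longrightarrow> A \<in> carrier_mat K K \<longrightarrow>
       (\<forall>i\<in>{1..K}. \<forall>j\<in>{1..d}. \<bar>ent X i j\<bar> \<le> \<Omega>) \<longrightarrow>
       ent X 1 Bg = 1 \<longrightarrow> (\<forall>i\<in>{2..K}. ent X i Bg = 0) \<longrightarrow>
       ent X 1 Bl = 0 \<longrightarrow> (\<forall>i\<in>{2..K}. ent X i Bl = 1) \<longrightarrow>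
       ent X 1 C = 0 \<longrightarrow> (\<forall>i\<in>{2..K}. ent X i C \<in> {0, 1}) \<longrightarrow>
       (\<forall>i\<in>{2..K}. ent X i E = 0) \<longrightarrow>
       apply_layer L X A =
         upd_entry X 1 E (if \<forall>i\<in>{2..K}. ent X i C \<noteq> 0 then 1 else 0))"
proof (intro exI[of _ "termination_layer d (C - 1) (E - 1) (Bg - 1) (Bl - 1)"] conjI
    valid_termination_layer allI impI, goal_cases)
  case (1 X A)
  then interpret termination_input X "C - 1" "E - 1" "Bg - 1" "Bl - 1"
    using assms(2-6) by unfold_locales (auto simp: ent_def ball_from_2_shift)
  show ?case
    using 1 assms(4) apply_termination_layer by (simp add: ent_def ball_from_2_shift)
qed

end
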